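(* Let $\rho\ge 0$ and consider the two-dimensional Poisson regression model with interaction at $\boldsymbol{\beta}=(0,-1,-1,-\rho)^\top$ on $\mathcal{X}=[0,\infty)^2$. Let $\xi$ be a design on $\mathcal{X}$ with nonsingular information matrix that is invariant under the permutation $(x_1,x_2)\mapsto(x_2,x_1)$ of the coordinates. Then the deduced sensitivity function $d(\mathbf{x};\xi)$ attains its maximum over $\mathcal{X}$ on the boundary of $\mathcal{X}$ (points with $x_1=0$ or $x_2=0$) or on the diagonal of $\mathcal{X}$ (points with $x_1=x_2$); that is, $\sup_{\mathbf{x}\in\mathcal{X}} d(\mathbf{x};\xi)=\sup\{d(\mathbf{x};\xi): \mathbf{x}\in\mathcal{X},\ x_1=0\text{ or }x_2=0\text{ or }x_1=x_2\}$.
   Context: In the model, an observation at setting $\mathbf{x}=(x_1,x_2)$ is Poisson distributed with mean $\lambda(\mathbf{x})=\exp(\mathbf{f}(\mathbf{x})^\top\boldsymbol{\beta})$, where $\mathbf{f}(\mathbf{x})=(1,x_1,x_2,x_1x_2)^\top$; with $\boldsymbol{\beta}=(0,-1,-1,-\rho)^\top$ this is $\lambda(\mathbf{x})=\exp(-x_1-x_2-\rho x_1x_2)$. A design $\xi$ is a finite collection of distinct settings $\mathbf{x}_i\in\mathcal{X}$ with weights $w_i\ge0$ summing to $1$; its information matrix is $\mathbf{M}(\xi)=\sum_i w_i\lambda(\mathbf{x}_i)\mathbf{f}(\mathbf{x}_i)\mathbf{f}(\mathbf{x}_i)^\top$. The design is invariant under permutation if the setting $(x_2,x_1)$ carries the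 same weight as $(x_1,x_2)$ for every setting. The deduced sensitivity function is $d(\mathbf{x};\xi)=\mathbf{f}(\mathbf{x})^\top\mathbf{M}(\xi)^{-1}\mathbf{f}(\mathbf{x})/p-1/\lambda(\mathbf{x})$ with $p=4$. *)

theory Defs
  imports "HOL-Analysis.Analysis"
begin

definition fvec :: "real \<times> real \<Rightarrow> real^4" where
  "fvec x = vector [1, fst x, snd x, fst x * snd x]"

text \<open>Intensity lambda(x) = exp(f(x)^T beta) with beta = (0,-1,-1,-rho).\<close>
definition lam :: "real \<Rightarrow> real \<times> real \<Rightarrow> real" where
  "lam \<rho> x = exp (- fst x - snd x - \<rho> * fst x * snd x)"

definition Xdom :: "(real \<times> real) set" where
  "Xdom = {x. 0 \<le> fst x \<and> 0 \<le> snd x}"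

definition is_design :: "(real \<times> real) set \<Rightarrow> (real \<times> real \<Rightarrow> real) \<Rightarrow> bool" where
  "is_design S w \<longleftrightarrow> finite S \<and> S \<subseteq> Xdom \<and> (\<forall>x\<in>S. 0 \<le> w x) \<and> sum w S = 1"

definition info_mat :: "real \<Rightarrow> (real \<times> real) set \<Rightarrow> (real \<times> real \<Rightarrow> real) \<Rightarrow> real^4^4" where
  "info_mat \<rho> S w = (\<Sum>x\<in>S. (w x * lam \<rho> x) *\<^sub>R (\<chi> i j. fvec x $ i * fvec x $ j))"

definition perm_invariant :: "(real \<times> real) set \<Rightarrow> (real \<times> real \<Rightarrow> real) \<Rightarrow> bool" where
  "perm_invariant S w \<longleftrightarrow> (\<forall>x\<in>S. (snd x, fst x) \<in> S \<and> w (snd x, fst x) = w x)"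

text \<open>Deduced sensitivity function d(x;xi) = f(x)^T M^{-1} f(x)/p - 1/lambda(x), p = 4.\<close>
definition sens :: "real \<Rightarrow> (real \<times> real) set \<Rightarrow> (real \<times> real \<Rightarrow> real) \<Rightarrow> real \<times> real \<Rightarrow> real" where
  "sens \<rho> S w x = (fvec x \<bullet> (matrix_inv (info_mat \<rho> S w) *v fvec x)) / 4 - 1 / lam \<rho> x"

end

theory Submission
  imports Defs
begin

text \<open>
  Write \<open>A = M(\<xi>)\<^sup>-\<^sup>1\<close>, \<open>s = x\<^sub>1 + x\<^sub>2\<close> and \<open>t = x\<^sub>1 x\<^sub>2\<close>. The penalty \<open>1/\<lambda>(x) = exp (s + \<rho> t)\<close>
  depends only on \<open>s + \<rho> t\<close>, and for a permutation invariant design the form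
  \<open>f(x)\<^sup>T A f(x)\<close> is invariant under swapping \<open>x\<^sub>1, x\<^sub>2\<close>, hence half of its symmetrization,
  a quadratic polynomial in \<open>(s, t)\<close>. Along a level line \<open>s + \<rho> t = const\<close> this
  polynomial is a quadratic in the line parameter whose leading coefficient is a sum of two
  values of the positive semidefinite form \<open>A\<close>, so it is convex. The points of \<open>\<X>\<close> on the
  level line form a segment whose ends are a diagonal point (where \<open>s\<^sup>2 = 4 t\<close>) and a
  boundary point (where \<open>t = 0\<close>), and a convex function is dominated by its values at the
  ends of a segment.
\<close>

lemma vector4_nth [simp]:
  "(vector [a, b, c, d] :: 'a::zero^4) $ 1 = a"
  "(vector [a, b, c, d] :: 'a^4) $ 2 = b"
  "(vector [a, b, c, d] :: 'a^4) $ 3 = c"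
  "(vector [a, b, c, d] :: 'a^4) $ 4 = d"
  unfolding vector_def by simp_all

lemma matrix_inv_mult_vec_cancel:
  fixes M :: "'a::comm_semiring_1^'n^'n"
  assumes "invertible M"
  shows "M *v (matrix_inv M *v y) = y" "matrix_inv M *v (M *v y) = y"
proof -
  have "M ** matrix_inv M = mat 1 \<and> matrix_inv M ** M = mat 1"
    using someI_ex[OF assms[unfolded invertible_def]] by (simp add: matrix_inv_def)
  then show "M *v (matrix_inv M *v y) = y" "matrix_inv M *v (M *v y) = y"
    by (simp_all add: matrix_vector_mul_assoc)
qed

lemma matrix_inv_quadratic_form_nonneg:
  fixes M :: "real^'n^'n"
  assumes "invertible M" and "\<And>y. 0 \<le> y \<bullet> (M *v y)"
  shows "0 \<le> e \<bullet> (matrix_inv M *v e)"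
proof -
  have "e \<bullet> (matrix_inv M *v e) = (matrix_inv M *v e) \<bullet> (M *v (matrix_inv M *v e))"
    by (simp add: matrix_inv_mult_vec_cancel[OF assms(1)] inner_commute)
  then show ?thesis
    using assms(2) by simp
qed

lemma matrix_inv_commute:
  fixes M :: "'a::comm_semiring_1^'n^'n"
  assumes "invertible M" and "\<And>y. M *v P y = P (M *v y)"
  shows "matrix_inv M *v P y = P (matrix_inv M *v y)"
proof -
  have "P y = M *v P (matrix_inv M *v y)"
    by (simp add: assms(2) matrix_inv_mult_vec_cancel[OF assms(1)])
  then show ?thesis
    by (simp add: matrix_inv_mult_vec_cancel[OF assms(1)])
qed

definition swap23 :: "real^4 \<Rightarrow> real^4" where
  "swap23 y = vector [y $ 1, y $ 3, y $ 2, y $ 4]"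

lemma swap23_swap23 [simp]: "swap23 (swap23 y) = y"
  by (simp add: vec_eq_iff forall_4 swap23_def)

lemma inner_swap23: "swap23 y \<bullet> z = y \<bullet> swap23 z"
  by (simp add: inner_vec_def sum_4 swap23_def)

lemma swap23_sum: "swap23 (\<Sum>x\<in>S. c x *\<^sub>R u x) = (\<Sum>x\<in>S. c x *\<^sub>R swap23 (u x))"
  by (simp add: vec_eq_iff forall_4 swap23_def sum_component)

lemma fvec_swap: "fvec (prod.swap x) = swap23 (fvec x)"
  by (simp add: vec_eq_iff forall_4 fvec_def swap23_def mult.commute)

lemma lam_swap: "lam \<rho> (prod.swap x) = lam \<rho> x"
  by (simp add: lam_def algebra_simps)

lemma info_mat_mult_vec:
  "info_mat \<rho> S w *v y = (\<Sum>x\<in>S. (w x * lam \<rho> x * (fvec x \<bullet> y)) *\<^sub>R fvec x)"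
  by (simp add: vec_eq_iff info_mat_def matrix_vector_mult_def sum_component inner_vec_def
      sum_distrib_left sum_distrib_right sum.swap[of _ S] algebra_simps)

lemma info_mat_quadratic_form_nonneg:
  assumes "is_design S w"
  shows "0 \<le> y \<bullet> (info_mat \<rho> S w *v y)"
proof -
  have "y \<bullet> (info_mat \<rho> S w *v y) = (\<Sum>x\<in>S. (w x * lam \<rho> x) * (fvec x \<bullet> y)\<^sup>2)"
    by (simp add: info_mat_mult_vec inner_sum_right inner_commute power2_eq_square
        algebra_simps)
  also have "\<dots> \<ge> 0"
    using assms by (intro sum_nonneg) (simp add: is_design_def lam_def)
  finally show ?thesis .
qed

lemma info_mat_commute_swap23:
  assumes "perm_invariant S w"
  shows "info_mat \<rho> S w *v swap23 y = swap23 (info_mat \<rho> S w *v y)"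
proof -
  have "info_mat \<rho> S w *v swap23 y
      = (\<Sum>x\<in>S. (w x * lam \<rho> x * (fvec (prod.swap x) \<bullet> y)) *\<^sub>R fvec x)"
    by (simp add: info_mat_mult_vec fvec_swap inner_swap23)
  also have "\<dots> = (\<Sum>x\<in>S. (w x * lam \<rho> x * (fvec x \<bullet> y)) *\<^sub>R fvec (prod.swap x))"
    using assms
    by (intro sum.reindex_bij_witness[of _ prod.swap prod.swap])
      (auto simp: perm_invariant_def lam_swap)
  also have "\<dots> = swap23 (info_mat \<rho> S w *v y)"
    by (simp add: info_mat_mult_vec swap23_sum fvec_swap)
  finally show ?thesis .
qed

lemma inverse_info_mat_form_swap:
  assumes "perm_invariant S w" and "invertible (info_mat \<rho> S w)"
  defines "A \<equiv> matrix_inv (info_mat \<rho> S w)"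
  shows "fvec (prod.swap z) \<bullet> (A *v fvec (prod.swap z)) = fvec z \<bullet> (A *v fvec z)"
  using matrix_inv_commute[where P = swap23, OF assms(2) info_mat_commute_swap23[OF assms(1)]]
  by (simp add: A_def fvec_swap inner_swap23)

definition symmetrized_form :: "real^4^4 \<Rightarrow> real \<Rightarrow> real \<Rightarrow> real" where
  "symmetrized_form A s t =
     2 * A$1$1 + (A$1$2 + A$2$1 + A$1$3 + A$3$1) * s + (A$2$2 + A$3$3) * (s\<^sup>2 - 2 * t)
     + 2 * (A$1$4 + A$4$1 + A$2$3 + A$3$2) * t + (A$2$4 + A$4$2 + A$3$4 + A$4$3) * s * t
     + 2 * A$4$4 * t\<^sup>2"

lemma form_add_form_swap:
  "fvec z \<bullet> (A *v fvec z) + fvec (prod.swap z) \<bullet> (A *v fvec (prod.swap z))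
     = symmetrized_form A (fst z + snd z) (fst z * snd z)"
  by (simp add: symmetrized_form_def inner_vec_def matrix_vector_mult_def sum_4 fvec_def
      power2_eq_square algebra_simps)

lemma symmetrized_form_along_level_line:
  "\<exists>\<beta>. \<forall>\<tau>. symmetrized_form A (s + \<rho> * \<tau>) (t - \<tau>) = symmetrized_form A s t + \<beta> * \<tau> +
     (vector [0, -\<rho>, 0, 1] \<bullet> (A *v vector [0, -\<rho>, 0, 1])
      + vector [0, 0, -\<rho>, 1] \<bullet> (A *v vector [0, 0, -\<rho>, 1])) * \<tau>\<^sup>2"
  by (rule exI[where x = "(A$1$2 + A$2$1 + A$1$3 + A$3$1) * \<rho> + (A$2$2 + A$3$3) * (2 * s * \<rho> + 2)
        - 2 * (A$1$4 + A$4$1 + A$2$3 + A$3$2) + (A$2$4 + A$4$2 + A$3$4 + A$4$3) * (\<rho> * t - s)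
        - 4 * A$4$4 * t"])
    (simp add: symmetrized_form_def inner_vec_def matrix_vector_mult_def sum_4
      power2_eq_square algebra_simps)

lemma convex_quadratic_le_max_ends:
  fixes \<alpha> \<beta> \<tau>\<^sub>1 \<tau>\<^sub>2 :: real
  assumes "0 \<le> \<alpha>" and "\<tau>\<^sub>1 \<le> 0" and "0 \<le> \<tau>\<^sub>2"
  shows "0 \<le> \<beta> * \<tau>\<^sub>1 + \<alpha> * \<tau>\<^sub>1\<^sup>2 \<or> 0 \<le> \<beta> * \<tau>\<^sub>2 + \<alpha> * \<tau>\<^sub>2\<^sup>2"
proof (cases "0 \<le> \<beta>")
  case True
  then show ?thesis
    using assms by simp
next
  case False
  moreover have "\<alpha> * \<tau>\<^sub>1 \<le> 0"
    using assms by (simp add: mult_nonneg_nonpos)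
  ultimately have "0 \<le> \<tau>\<^sub>1 * (\<beta> + \<alpha> * \<tau>\<^sub>1)"
    using assms by (intro mult_nonpos_nonpos) auto
  then show ?thesis
    by (simp add: power2_eq_square algebra_simps)
qed

lemma diagonal_point_on_level_curve:
  fixes a b \<rho> :: real
  assumes "0 \<le> a" "0 \<le> b" "0 \<le> \<rho>"
  obtains c where "0 \<le> c" "2 * c + \<rho> * c\<^sup>2 = a + b + \<rho> * a * b" "a * b \<le> c\<^sup>2"
proof -
  let ?u = "a + b + \<rho> * a * b"
  have "0 \<le> ?u / 2"
    using assms by simp
  moreover have "0 \<le> \<rho> * (?u / 2)\<^sup>2"
    using assms(3) by simp
  then have "?u \<le> 2 * (?u / 2) + \<rho> * (?u / 2)\<^sup>2"
    by (rule add_increasing2) simp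
  ultimately have "\<exists>c\<ge>0. c \<le> ?u / 2 \<and> 2 * c + \<rho> * c\<^sup>2 = ?u"
    by (intro IVT') (auto intro!: continuous_intros)
  then obtain c where c: "0 \<le> c" "2 * c + \<rho> * c\<^sup>2 = ?u"
    by blast
  have "a * b \<le> c\<^sup>2"
  proof (rule ccontr)
    assume "\<not> a * b \<le> c\<^sup>2"
    then have less: "c\<^sup>2 < a * b"
      by simp
    have "(a + b)\<^sup>2 - 4 * (a * b) = (a - b)\<^sup>2"
      by (simp add: power2_eq_square algebra_simps)
    then have "4 * c\<^sup>2 < (a + b)\<^sup>2"
      using less zero_le_power2[of "a - b"] by linarith
    then have "(2 * c)\<^sup>2 < (a + b)\<^sup>2"
      by (simp add: power_mult_distrib)
    then have "2 * c < a + b"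
      by (rule power_less_imp_less_base) (use assms in simp)
    moreover have "\<rho> * c\<^sup>2 \<le> \<rho> * a * b"
      using less assms(3) by (simp add: mult_left_mono mult.assoc)
    ultimately show False
      using c(2) by linarith
  qed
  with c that show ?thesis
    by blast
qed

lemma sens_eq_symmetrized_form:
  assumes "perm_invariant S w" and "invertible (info_mat \<rho> S w)"
  shows "sens \<rho> S w z =
    symmetrized_form (matrix_inv (info_mat \<rho> S w)) (fst z + snd z) (fst z * snd z) / 8
    - exp (fst z + snd z + \<rho> * fst z * snd z)"
proof -
  have "lam \<rho> z = exp (- (fst z + snd z + \<rho> * fst z * snd z))"
    by (simp add: lam_def algebra_simps)
  then have "1 / lam \<rho> z = exp (fst z + snd z + \<rho> * fst z * snd z)"
    by (simp only: exp_minus divide_inverse inverse_inverse_eq mult_1_left)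
  moreover have "fvec z \<bullet> (matrix_inv (info_mat \<rho> S w) *v fvec z) =
      symmetrized_form (matrix_inv (info_mat \<rho> S w)) (fst z + snd z) (fst z * snd z) / 2"
    using form_add_form_swap[of z "matrix_inv (info_mat \<rho> S w)"] inverse_info_mat_form_swap[OF assms, of z]
    by linarith
  ultimately show ?thesis
    by (simp add: sens_def)
qed

lemma symmetrized_form_le_level_segment_ends:
  fixes A :: "real^4^4"
  assumes psd: "\<And>e. 0 \<le> e \<bullet> (A *v e)"
    and "0 \<le> a * b" and c: "2 * c + \<rho> * c\<^sup>2 = a + b + \<rho> * a * b" "a * b \<le> c\<^sup>2"
  shows "symmetrized_form A (a + b) (a * b) \<le> symmetrized_form A (c + c) (c * c) \<or>
    symmetrized_form A (a + b) (a * b) \<le> symmetrized_form A (a + b + \<rho> * a * b) 0"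
proof -
  let ?R = "symmetrized_form A"
  define \<alpha> where "\<alpha> = vector [0, -\<rho>, 0, 1] \<bullet> (A *v vector [0, -\<rho>, 0, 1])
      + vector [0, 0, -\<rho>, 1] \<bullet> (A *v vector [0, 0, -\<rho>, 1])"
  have "0 \<le> \<alpha>"
    unfolding \<alpha>_def by (intro add_nonneg_nonneg psd)
  obtain \<beta> where line: "\<And>\<tau>. ?R (a + b + \<rho> * \<tau>) (a * b - \<tau>) = ?R (a + b) (a * b) + \<beta> * \<tau> + \<alpha> * \<tau>\<^sup>2"
    using symmetrized_form_along_level_line[of A "a + b" \<rho> "a * b"] unfolding \<alpha>_def by blast
  have diagonal: "?R (a + b + \<rho> * (a * b - c\<^sup>2)) (a * b - (a * b - c\<^sup>2)) = ?R (c + c) (c * c)"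
    using c(1) by (intro arg_cong2[where f = ?R]) (simp_all add: power2_eq_square algebra_simps)
  have boundary: "?R (a + b + \<rho> * (a * b)) (a * b - a * b) = ?R (a + b + \<rho> * a * b) 0"
    by (simp add: mult.assoc)
  have "a * b - c\<^sup>2 \<le> 0"
    using c(2) by simp
  then have "0 \<le> \<beta> * (a * b - c\<^sup>2) + \<alpha> * (a * b - c\<^sup>2)\<^sup>2 \<or> 0 \<le> \<beta> * (a * b) + \<alpha> * (a * b)\<^sup>2"
    using \<open>0 \<le> a * b\<close> by (rule convex_quadratic_le_max_ends[OF \<open>0 \<le> \<alpha>\<close>])
  then show ?thesis
  proof (elim disjE)
    assume "0 \<le> \<beta> * (a * b - c\<^sup>2) + \<alpha> * (a * b - c\<^sup>2)\<^sup>2"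
    then show ?thesis
      using line[of "a * b - c\<^sup>2"] diagonal by linarith
  next
    assume "0 \<le> \<beta> * (a * b) + \<alpha> * (a * b)\<^sup>2"
    then show ?thesis
      using line[of "a * b"] boundary by linarith
  qed
qed

lemma sens_le_boundary_or_diagonal:
  assumes "0 \<le> \<rho>" and "is_design S w" and "invertible (info_mat \<rho> S w)"
    and "perm_invariant S w" and "x \<in> Xdom"
  shows "\<exists>y\<in>{x\<in>Xdom. fst x = 0 \<or> snd x = 0 \<or> fst x = snd x}. sens \<rho> S w x \<le> sens \<rho> S w y"
proof -
  obtain a b where x: "x = (a, b)" and ab: "0 \<le> a" "0 \<le> b"
    using assms(5) by (cases x) (auto simp: Xdom_def)
  define u where "u = a + b + \<rho> * a * b"
  obtain c where c: "0 \<le> c" "2 * c + \<rho> * c\<^sup>2 = u" "a * b \<le> c\<^sup>2"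
    using diagonal_point_on_level_curve[OF ab assms(1)] unfolding u_def .
  define A where "A = matrix_inv (info_mat \<rho> S w)"
  have "0 \<le> e \<bullet> (A *v e)" for e
    unfolding A_def using assms(2,3)
    by (intro matrix_inv_quadratic_form_nonneg info_mat_quadratic_form_nonneg)
  then have "symmetrized_form A (a + b) (a * b) \<le> symmetrized_form A (c + c) (c * c) \<or>
      symmetrized_form A (a + b) (a * b) \<le> symmetrized_form A u 0"
    using ab c(2,3) unfolding u_def by (intro symmetrized_form_le_level_segment_ends) simp_all
  moreover have "sens \<rho> S w z = symmetrized_form A (fst z + snd z) (fst z * snd z) / 8 - exp u"
    if "fst z + snd z + \<rho> * fst z * snd z = u" for z
    using sens_eq_symmetrized_form[OF assms(4,3)] that by (simp add: A_def)
  moreover have "c + c + \<rho> * c * c = u"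
    using c(2) by (simp add: power2_eq_square)
  ultimately have "sens \<rho> S w x \<le> sens \<rho> S w (c, c) \<or> sens \<rho> S w x \<le> sens \<rho> S w (u, 0)"
    by (simp add: x u_def)
  moreover have "0 \<le> u"
    using ab assms(1) by (simp add: u_def)
  ultimately show ?thesis
    using c(1) by (auto simp: Xdom_def)
qed

theorem lemma2:
  fixes \<rho> :: real and S :: "(real \<times> real) set" and w :: "real \<times> real \<Rightarrow> real"
  assumes "0 \<le> \<rho>"
    and "is_design S w"
    and "invertible (info_mat \<rho> S w)"
    and "perm_invariant S w"
  shows "(SUP x\<in>Xdom. ereal (sens \<rho> S w x)) =
         (SUP x\<in>{x\<in>Xdom. fst x = 0 \<or> snd x = 0 \<or> fst x = snd x}. ereal (sens \<rho> S w x))"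
proof (rule antisym)
  show "(SUP x\<in>Xdom. ereal (sens \<rho> S w x)) \<le>
        (SUP x\<in>{x\<in>Xdom. fst x = 0 \<or> snd x = 0 \<or> fst x = snd x}. ereal (sens \<rho> S w x))"
    using sens_le_boundary_or_diagonal[OF assms] by (intro SUP_mono) auto
  show "(SUP x\<in>{x\<in>Xdom. fst x = 0 \<or> snd x = 0 \<or> fst x = snd x}. ereal (sens \<rho> S w x))
        \<le> (SUP x\<in>Xdom. ereal (sens \<rho> S w x))"
    by (rule SUP_subset_mono) auto
qed

end
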